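(* Let $N\ge 2$, $d\ge1$, and let $\tilde\psi:\mathbb{R}\to\mathbb{R}$ be a positive, bounded, continuous function with $\tilde K:=\|\tilde\psi\|_\infty$. Let $\{t_n\}_{n\in\mathbb{N}_0}$ be an increasing sequence of nonnegative numbers with $t_0=0$, $t_n\to\infty$, and define $\alpha:[0,\infty)\to\{-1,1\}$ by $\alpha(0)=1$, $\alpha(t)=1$ on $(t_{2n},t_{2n+1})$, $\alpha(t)=-1$ on $[t_{2n+1},t_{2n+2}]$, $n\in\mathbb{N}_0$. Assume $t_{2n+2}-t_{2n+1}<\frac{\ln 2}{\tilde K}$ for all $n\in\mathbb{N}_0$, $$\sum_{p=0}^{\infty}\ln\left(\frac{e^{\tilde K(t_{2p+2}-t_{2p+1})}}{2-e^{\tilde K(t_{2p+2}-t_{2p+1})}}\right)<+\infty,$$ $$\sum_{p=0}^{\infty}\ln\left(\max\left\{1-e^{-\tilde K(t_{2p+1}-t_{2p})},\,1-\frac{\tilde\psi_0}{\tilde K}\big(1-e^{-\tilde K(t_{2p+1}-t_{2p})}\big)\right\}\right)=-\infty,$$ where $\tilde\psi_0:=\min_{|y|\le \tilde M^0}\tilde\psi(y)$ and $$\tilde M^0:=e^{\sum_{p=0}^{\infty}\ln\left(\frac{e^{\tilde K(t_{2p+2}-t_{2p+1})}}{2-e^{\tilde K(t_{2p+2}-t_{2p+1})}}\right)}d(0),\qquad d(0)=\max_{i,j}|x_i^0-x_j^0|.$$ Then every solution $\{x_i\}_{i=1,\dots,N}$ of $$\frac{d}{dt}x_i(t)=\frac{1}{N-1}\sum_{j\ne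 i}\alpha(t)\,\tilde\psi(|x_i(t)-x_j(t)|)\,(x_j(t)-x_i(t)),\quad t>0,\qquad x_i(0)=x_i^0\in\mathbb{R}^d,$$ converges to consensus, i.e. $\lim_{t\to\infty}\max_{i,j}|x_i(t)-x_j(t)|=0$.
   Context: $\mathbb{N}_0=\{0,1,2,\dots\}$. A solution is a continuous function that is $C^1$ on each interval $(t_n,t_{n+1})$ and satisfies the equation there. *)

theory Defs
  imports "HOL-Analysis.Analysis"
begin

definition switch_alpha :: "(nat \<Rightarrow> real) \<Rightarrow> real \<Rightarrow> real" where
  "switch_alpha t s =
     (if s = 0 then 1
      else if (\<exists>n. t (2*n+1) \<le> s \<and> s \<le> t (2*n+2)) then -1 else 1)"

definition diam_conf :: "nat \<Rightarrow> (nat \<Rightarrow> real \<Rightarrow> 'a::real_normed_vector) \<Rightarrow> real \<Rightarrow> real" where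
  "diam_conf N x s = Max {norm (x i s - x j s) | i j. i < N \<and> j < N}"

definition cons_rhs :: "nat \<Rightarrow> (nat \<Rightarrow> real) \<Rightarrow> (real \<Rightarrow> real) \<Rightarrow> (nat \<Rightarrow> real \<Rightarrow> 'a::real_normed_vector)
    \<Rightarrow> nat \<Rightarrow> real \<Rightarrow> 'a" where
  "cons_rhs N t \<psi> x i s =
     (1 / (real N - 1)) *\<^sub>R
       (\<Sum>j\<in>{..<N} - {i}. (switch_alpha t s * \<psi> (norm (x i s - x j s))) *\<^sub>R (x j s - x i s))"

definition is_solution :: "nat \<Rightarrow> (nat \<Rightarrow> real) \<Rightarrow> (real \<Rightarrow> real) \<Rightarrow> (nat \<Rightarrow> real \<Rightarrow> 'a::real_normed_vector) \<Rightarrow> bool" where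
  "is_solution N t \<psi> x \<longleftrightarrow>
     (\<forall>i<N. continuous_on {0..} (x i) \<and>
        (\<forall>n. (\<forall>s\<in>{t n<..<t (Suc n)}. (x i has_vector_derivative cons_rhs N t \<psi> x i s) (at s)) \<and>
             continuous_on {t n<..<t (Suc n)} (\<lambda>s. vector_derivative (x i) (at s))))"

end

(* Let d be the diameter of the configuration. At a pair (i, k) realising it, all agents lie in
   the slab between the hyperplanes through x_i and x_k orthogonal to x_i - x_k. Hence d^2 obeys
   a one-sided Gronwall inequality: on an attracting phase d does not increase, and it decays at
   rate psi0 as long as d <= M0 (so that all weights are at least psi0); on a repelling phase it
   grows at rate at most 2K. Over the p-th cycle d is thus multiplied by at most
   exp (2K (t_{2p+2} - t_{2p+1}) - psi0 (t_{2p+1} - t_{2p})). Since 2y <= ln (e^y / (2 - e^y))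
   for 0 <= y < ln 2, the first series bounds all these products, which keeps d below M0 and the
   estimate self-consistent; by convexity of exp, -psi0 tau <= ln (1 - (psi0/K)(1 - e^(-K tau))),
   so the second series drives the products to 0. *)

theory Submission
  imports Defs
begin

section \<open>Growth of the maximum of finitely many functions\<close>

lemma continuous_on_Max_finite:
  fixes f :: "'p \<Rightarrow> 'b::topological_space \<Rightarrow> real"
  assumes "finite P" "P \<noteq> {}" "\<And>p. p \<in> P \<Longrightarrow> continuous_on S (f p)"
  shows "continuous_on S (\<lambda>u. Max ((\<lambda>p. f p u) ` P))"
  using assms
proof (induction P rule: finite_ne_induct)
  case (insert p P)
  have "(\<lambda>u. Max ((\<lambda>q. f q u) ` insert p P)) = (\<lambda>u. max (f p u) (Max ((\<lambda>q. f q u) ` P)))"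
    using insert by auto
  then show ?case using insert by (auto intro!: continuous_on_max)
qed simp

lemma local_right_nonincreasing_imp_le:
  fixes g :: "real \<Rightarrow> real"
  assumes "a \<le> b" "continuous_on {a..b} g"
    and local: "\<And>u. a \<le> u \<Longrightarrow> u < b \<Longrightarrow> eventually (\<lambda>v. g v \<le> g u) (at_right u)"
  shows "g b \<le> g a"
proof -
  define T where "T = {s \<in> {a..b}. g s \<le> g a}"
  have "a \<in> T" "bdd_above T" using assms(1) by (auto simp: T_def intro: bdd_aboveI[of _ b])
  moreover have "closed T"
    unfolding T_def using assms(2) by (intro continuous_on_closed_Collect_le continuous_on_const) auto
  ultimately have "Sup T \<in> T" by (intro closed_contains_Sup) auto
  then have \<sigma>: "a \<le> Sup T" "Sup T \<le> b" "g (Sup T) \<le> g a" by (auto simp: T_def)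
  show ?thesis
  proof (cases "Sup T = b")
    case False
    then obtain e where e: "Sup T < e" "\<And>v. Sup T < v \<Longrightarrow> v < e \<Longrightarrow> g v \<le> g (Sup T)"
      using local[of "Sup T"] \<sigma> unfolding eventually_at_right_field by auto
    define w where "w = min ((Sup T + e) / 2) b"
    have "Sup T < w" "w \<le> b" "w < e" using e \<sigma> False by (auto simp: w_def min_def)
    then have "w \<in> T" using e(2)[of w] \<sigma> by (simp add: T_def)
    then have "w \<le> Sup T" using \<open>bdd_above T\<close> by (rule cSup_upper)
    with \<open>Sup T < w\<close> show ?thesis by simp
  qed (use \<sigma> in simp)
qed

lemma local_right_nonincreasing_interior_imp_le:
  fixes g :: "real \<Rightarrow> real"
  assumes "a < b" "continuous_on {a..b} g"
    and local: "\<And>u. a < u \<Longrightarrow> u < b \<Longrightarrow> eventually (\<lambda>v. g v \<le> g u) (at_right u)"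
  shows "g b \<le> g a"
proof -
  have "(g \<longlongrightarrow> g a) (at_right a)" using assms by (intro continuous_on_Icc_at_rightD)
  moreover have "eventually (\<lambda>a'. g b \<le> g a') (at_right a)"
    unfolding eventually_at_right_field
  proof (intro exI[of _ b] conjI allI impI)
    fix a' assume "a < a'" "a' < b"
    show "g b \<le> g a'"
    proof (rule local_right_nonincreasing_imp_le[of a' b g])
      show "continuous_on {a'..b} g"
        using assms(2) by (rule continuous_on_subset) (use \<open>a < a'\<close> in auto)
      show "eventually (\<lambda>v. g v \<le> g u) (at_right u)" if "a' \<le> u" "u < b" for u
        using local that \<open>a < a'\<close> by simp
    qed (use \<open>a' < b\<close> in simp)
  qed (rule assms(1))
  ultimately show ?thesis by (rule tendsto_lowerbound) simp
qed

lemma eventually_at_right_Max_le: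
  fixes G :: "'p \<Rightarrow> real \<Rightarrow> real"
  assumes P: "finite P" "P \<noteq> {}"
    and cont: "\<And>q. q \<in> P \<Longrightarrow> isCont (G q) u"
    and top: "\<And>q. q \<in> P \<Longrightarrow> G q u = Max ((\<lambda>q. G q u) ` P) \<Longrightarrow>
                eventually (\<lambda>v. G q v \<le> G q u) (at_right u)"
  shows "eventually (\<lambda>v. Max ((\<lambda>q. G q v) ` P) \<le> Max ((\<lambda>q. G q u) ` P)) (at_right u)"
proof -
  have "eventually (\<lambda>v. G q v \<le> Max ((\<lambda>q. G q u) ` P)) (at_right u)" if q: "q \<in> P" for q
  proof (cases "G q u = Max ((\<lambda>q. G q u) ` P)")
    case True
    then show ?thesis using top[OF q True] by simp
  next
    case False
    then have "G q u < Max ((\<lambda>q. G q u) ` P)" using P q by (simp add: order_less_le)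
    moreover have "(G q \<longlongrightarrow> G q u) (at_right u)"
      using cont[OF q] unfolding isCont_def by (rule tendsto_mono[rotated]) (simp add: at_le)
    ultimately have "eventually (\<lambda>v. G q v < Max ((\<lambda>q. G q u) ` P)) (at_right u)"
      by (intro order_tendstoD(2))
    then show ?thesis by eventually_elim simp
  qed
  then have "eventually (\<lambda>v. \<forall>q\<in>P. G q v \<le> Max ((\<lambda>q. G q u) ` P)) (at_right u)"
    using P(1) by (simp add: eventually_ball_finite)
  then show ?thesis by eventually_elim (use P in simp)
qed

lemma Max_le_if_deriv_neg_at_Max:
  fixes g g' :: "'p \<Rightarrow> real \<Rightarrow> real"
  assumes P: "finite P" "P \<noteq> {}" and "a < b"
    and cont: "\<And>p. p \<in> P \<Longrightarrow> continuous_on {a..b} (g p)"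
    and deriv: "\<And>p u. p \<in> P \<Longrightarrow> u \<in> {a<..<b} \<Longrightarrow> (g p has_real_derivative g' p u) (at u)"
    and neg: "\<And>p u. p \<in> P \<Longrightarrow> u \<in> {a<..<b} \<Longrightarrow> g p u = Max ((\<lambda>q. g q u) ` P) \<Longrightarrow> g' p u < 0"
  shows "Max ((\<lambda>p. g p b) ` P) \<le> Max ((\<lambda>p. g p a) ` P)"
proof (rule local_right_nonincreasing_interior_imp_le[OF \<open>a < b\<close>, where g = "\<lambda>u. Max ((\<lambda>p. g p u) ` P)"])
  show "continuous_on {a..b} (\<lambda>u. Max ((\<lambda>p. g p u) ` P))"
    using P cont by (rule continuous_on_Max_finite)
  fix u assume "a < u" "u < b"
  then have u: "u \<in> {a<..<b}" by simp
  show "eventually (\<lambda>v. Max ((\<lambda>p. g p v) ` P) \<le> Max ((\<lambda>p. g p u) ` P)) (at_right u)"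
  proof (rule eventually_at_right_Max_le[OF P])
    fix p assume p: "p \<in> P"
    show "isCont (g p) u" using deriv[OF p u] by (rule DERIV_isCont)
    assume "g p u = Max ((\<lambda>q. g q u) ` P)"
    from DERIV_neg_dec_right[OF deriv[OF p u] neg[OF p u this]] obtain d where
      d: "d > 0" "\<And>h. h > 0 \<Longrightarrow> h < d \<Longrightarrow> g p (u + h) < g p u" by auto
    show "eventually (\<lambda>v. g p v \<le> g p u) (at_right u)"
      unfolding eventually_at_right_field
    proof (intro exI[of _ "u + d"] conjI allI impI)
      fix v assume "u < v" "v < u + d"
      then show "g p v \<le> g p u" using d(2)[of "v - u"] by simp
    qed (use d in simp)
  qed
qed

lemma Max_exp_growth_slack:
  fixes f f' :: "'p \<Rightarrow> real \<Rightarrow> real"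
  assumes P: "finite P" "P \<noteq> {}" and "e > 0" and s: "a < s" "s \<le> b"
    and cont: "\<And>p. p \<in> P \<Longrightarrow> continuous_on {a..b} (f p)"
    and deriv: "\<And>p u. p \<in> P \<Longrightarrow> u \<in> {a<..<b} \<Longrightarrow> (f p has_real_derivative f' p u) (at u)"
    and top: "\<And>p u. p \<in> P \<Longrightarrow> u \<in> {a<..<b} \<Longrightarrow> f p u = Max ((\<lambda>q. f q u) ` P) \<Longrightarrow>
                f' p u \<le> c * f p u"
  shows "exp (- c * (s - a)) * Max ((\<lambda>p. f p s) ` P) - e * (s - a) \<le> Max ((\<lambda>p. f p a) ` P)"
proof -
  \<comment> \<open>the slack \<open>e\<close> makes the derivative at a maximal index strictly negative\<close>
  define G where "G p u = exp (- c * (u - a)) * f p u - e * (u - a)" for p u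
  have Max_G: "Max ((\<lambda>p. G p u) ` P) = exp (- c * (u - a)) * Max ((\<lambda>p. f p u) ` P) - e * (u - a)" for u
  proof -
    have "mono (\<lambda>y. exp (- c * (u - a)) * y - e * (u - a))" by (auto intro: monoI)
    from mono_Max_commute[OF this, of "(\<lambda>p. f p u) ` P"] P show ?thesis
      by (simp add: G_def image_image)
  qed
  have "Max ((\<lambda>p. G p s) ` P) \<le> Max ((\<lambda>p. G p a) ` P)"
  proof (rule Max_le_if_deriv_neg_at_Max[OF P \<open>a < s\<close>])
    show "continuous_on {a..s} (G p)" if "p \<in> P" for p
    proof -
      have "continuous_on {a..s} (f p)"
        using cont[OF that] by (rule continuous_on_subset) (use s in auto)
      then show ?thesis unfolding G_def by (intro continuous_intros)
    qed
    show "(G p has_real_derivative exp (- c * (u - a)) * (f' p u - c * f p u) - e) (at u)"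
      if "p \<in> P" "u \<in> {a<..<s}" for p u
      unfolding G_def using deriv[OF that(1)] that(2) s
      by (auto intro!: derivative_eq_intros simp: algebra_simps)
    fix p u assume p: "p \<in> P" and u: "u \<in> {a<..<s}" and "G p u = Max ((\<lambda>q. G q u) ` P)"
    then have "f p u = Max ((\<lambda>q. f q u) ` P)" unfolding Max_G by (simp add: G_def)
    then have "f' p u \<le> c * f p u" using top[OF p] u s by simp
    then have "exp (- c * (u - a)) * (f' p u - c * f p u) \<le> 0"
      by (intro mult_nonneg_nonpos) auto
    then show "exp (- c * (u - a)) * (f' p u - c * f p u) - e < 0"
      using \<open>e > 0\<close> by linarith
  qed
  then show ?thesis unfolding Max_G by simp
qed

lemma Max_exp_growth:
  fixes f f' :: "'p \<Rightarrow> real \<Rightarrow> real"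
  assumes P: "finite P" "P \<noteq> {}" and s: "a \<le> s" "s \<le> b"
    and cont: "\<And>p. p \<in> P \<Longrightarrow> continuous_on {a..b} (f p)"
    and deriv: "\<And>p u. p \<in> P \<Longrightarrow> u \<in> {a<..<b} \<Longrightarrow> (f p has_real_derivative f' p u) (at u)"
    and top: "\<And>p u. p \<in> P \<Longrightarrow> u \<in> {a<..<b} \<Longrightarrow> f p u = Max ((\<lambda>q. f q u) ` P) \<Longrightarrow>
                f' p u \<le> c * f p u"
  shows "Max ((\<lambda>p. f p s) ` P) \<le> exp (c * (s - a)) * Max ((\<lambda>p. f p a) ` P)"
proof -
  define M where "M u = Max ((\<lambda>p. f p u) ` P)" for u
  have "exp (- c * (s - a)) * M s \<le> M a"
  proof (cases "a = s")
    case False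
    with s have "a < s" by simp
    show ?thesis
    proof (rule field_le_epsilon)
      fix \<epsilon> :: real assume "\<epsilon> > 0"
      with \<open>a < s\<close> have "\<epsilon> / (s - a) > 0" by simp
      from Max_exp_growth_slack[where f = f and f' = f' and c = c, OF P this \<open>a < s\<close> s(2) cont deriv top]
      have "exp (- c * (s - a)) * M s - \<epsilon> / (s - a) * (s - a) \<le> M a" by (simp only: M_def)
      with \<open>a < s\<close> show "exp (- c * (s - a)) * M s \<le> M a + \<epsilon>" by simp
    qed
  qed simp
  then have "exp (c * (s - a)) * (exp (- c * (s - a)) * M s) \<le> exp (c * (s - a)) * M a"
    by (rule mult_left_mono) simp
  then show ?thesis by (simp add: M_def mult.assoc[symmetric] exp_add[symmetric])
qed

section \<open>The diameter of a configuration\<close>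

lemma has_real_derivative_norm_power2:
  fixes f :: "real \<Rightarrow> 'a::real_inner"
  assumes "(f has_vector_derivative f') (at s)"
  shows "((\<lambda>u. (norm (f u))\<^sup>2) has_real_derivative 2 * inner (f s) f') (at s)"
proof -
  have "((\<lambda>u. inner (f u) (f u)) has_derivative (\<lambda>h. inner (f s) (h *\<^sub>R f') + inner (h *\<^sub>R f') (f s))) (at s)"
    using assms unfolding has_vector_derivative_def by (intro has_derivative_inner)
  then show ?thesis unfolding has_field_derivative_def power2_norm_eq_inner
    by (rule has_derivative_eq_rhs) (auto simp: inner_commute algebra_simps)
qed

lemma diam_conf_eq_Max:
  "diam_conf N x s = Max ((\<lambda>p. norm (x (fst p) s - x (snd p) s)) ` ({..<N} \<times> {..<N}))"
  unfolding diam_conf_def by (rule arg_cong[where f = Max]) (auto intro: rev_image_eqI[of "(i, j)" for i j], blast)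

lemma norm_le_diam_conf:
  assumes "i < N" "j < N"
  shows "norm (x i s - x j s) \<le> diam_conf N x s"
  unfolding diam_conf_eq_Max using assms by (intro Max_ge) (auto intro: image_eqI[of _ _ "(i, j)"])

lemma diam_conf_nonneg: "0 < N \<Longrightarrow> 0 \<le> diam_conf N x s"
  using norm_le_diam_conf[of 0 N 0 x s] by (meson norm_ge_zero order_trans)

lemma diam_conf_attained:
  assumes "0 < N"
  obtains i j where "i < N" "j < N" "diam_conf N x s = norm (x i s - x j s)"
proof -
  have "diam_conf N x s \<in> (\<lambda>p. norm (x (fst p) s - x (snd p) s)) ` ({..<N} \<times> {..<N})"
    unfolding diam_conf_eq_Max using assms by (intro Max_in) auto
  then show ?thesis using that by auto
qed

lemma diam_conf_power2_eq_Max: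
  assumes "0 < N"
  shows "(diam_conf N x s)\<^sup>2 = Max ((\<lambda>p. (norm (x (fst p) s - x (snd p) s))\<^sup>2) ` ({..<N} \<times> {..<N}))"
proof (rule sym, rule Max_eqI)
  obtain i j where "i < N" "j < N" "diam_conf N x s = norm (x i s - x j s)"
    using diam_conf_attained[OF assms] .
  then show "(diam_conf N x s)\<^sup>2 \<in> (\<lambda>p. (norm (x (fst p) s - x (snd p) s))\<^sup>2) ` ({..<N} \<times> {..<N})"
    by (auto intro: image_eqI[of _ _ "(i, j)"])
qed (auto intro!: power_mono norm_le_diam_conf)

lemma diam_conf_exp_bound:
  fixes x v :: "nat \<Rightarrow> real \<Rightarrow> 'a::real_inner"
  assumes N: "0 < N" and s: "a \<le> s" "s \<le> b"
    and cont: "\<And>i. i < N \<Longrightarrow> continuous_on {a..b} (x i)"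
    and deriv: "\<And>i u. i < N \<Longrightarrow> u \<in> {a<..<b} \<Longrightarrow> (x i has_vector_derivative v i u) (at u)"
    and rate: "\<And>i k u. i < N \<Longrightarrow> k < N \<Longrightarrow> u \<in> {a<..<b} \<Longrightarrow>
                 norm (x i u - x k u) = diam_conf N x u \<Longrightarrow>
                 inner (x i u - x k u) (v i u - v k u) \<le> c * (norm (x i u - x k u))\<^sup>2"
  shows "diam_conf N x s \<le> exp (c * (s - a)) * diam_conf N x a"
proof -
  define P where "P = {..<N} \<times> {..<N}"
  define f where "f p u = (norm (x (fst p) u - x (snd p) u))\<^sup>2" for p u
  define f' where "f' p u = 2 * inner (x (fst p) u - x (snd p) u) (v (fst p) u - v (snd p) u)" for p u
  have Max_f: "Max ((\<lambda>p. f p u) ` P) = (diam_conf N x u)\<^sup>2" for u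
    unfolding P_def f_def by (rule diam_conf_power2_eq_Max[OF N, symmetric])
  have "Max ((\<lambda>p. f p s) ` P) \<le> exp ((2 * c) * (s - a)) * Max ((\<lambda>p. f p a) ` P)"
  proof (rule Max_exp_growth[OF _ _ s])
    show "finite P" "P \<noteq> {}" using N by (auto simp: P_def)
    show "continuous_on {a..b} (f p)" if "p \<in> P" for p
      using cont that unfolding P_def f_def by (auto intro!: continuous_intros)
    show "(f p has_real_derivative f' p u) (at u)" if "p \<in> P" "u \<in> {a<..<b}" for p u
      using deriv that unfolding P_def f_def f'_def
      by (auto intro!: has_real_derivative_norm_power2 has_vector_derivative_diff)
    show "f' p u \<le> 2 * c * f p u"
      if "p \<in> P" "u \<in> {a<..<b}" "f p u = Max ((\<lambda>q. f q u) ` P)" for p u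
    proof -
      have "(norm (x (fst p) u - x (snd p) u))\<^sup>2 = (diam_conf N x u)\<^sup>2"
        using that(3) unfolding Max_f by (simp add: f_def)
      then have "norm (x (fst p) u - x (snd p) u) = diam_conf N x u"
        using diam_conf_nonneg[OF N, of x u] by (simp add: power2_eq_iff_nonneg)
      then show ?thesis using rate[of "fst p" "snd p" u] that(1,2) by (auto simp: P_def f_def f'_def)
    qed
  qed
  then have "(diam_conf N x s)\<^sup>2 \<le> (exp (c * (s - a)) * diam_conf N x a)\<^sup>2"
    by (simp add: Max_f power_mult_distrib exp_double[symmetric] mult_ac)
  then show ?thesis by (rule power2_le_imp_le) (simp add: diam_conf_nonneg[OF N])
qed

section \<open>The mean field at a diameter-realising pair\<close>

lemma diameter_pair_slab:
  fixes X :: "nat \<Rightarrow> 'a::real_inner"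
  assumes "i < N" "k < N" "j < N"
    and maximal: "\<And>j l. j < N \<Longrightarrow> l < N \<Longrightarrow> norm (X j - X l) \<le> norm (X i - X k)"
  shows "inner (X i - X k) (X j - X i) \<le> 0" and "0 \<le> inner (X i - X k) (X j - X k)"
proof -
  have "inner (X i - X k) (X j - X k) \<le> norm (X i - X k) * norm (X j - X k)"
    by (rule norm_cauchy_schwarz)
  also have "\<dots> \<le> (norm (X i - X k))\<^sup>2"
    using maximal assms by (auto simp: power2_eq_square intro: mult_left_mono)
  finally show "inner (X i - X k) (X j - X i) \<le> 0"
    by (simp add: inner_diff_right power2_norm_eq_inner)
  have "inner (X i - X k) (X i - X j) \<le> norm (X i - X k) * norm (X i - X j)"
    by (rule norm_cauchy_schwarz)
  also have "\<dots> \<le> (norm (X i - X k))\<^sup>2"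
    using maximal assms by (auto simp: power2_eq_square intro: mult_left_mono)
  finally show "0 \<le> inner (X i - X k) (X j - X k)"
    by (simp add: inner_diff_right power2_norm_eq_inner)
qed

definition mean_field :: "nat \<Rightarrow> (nat \<Rightarrow> nat \<Rightarrow> real) \<Rightarrow> (nat \<Rightarrow> 'a::real_vector) \<Rightarrow> nat \<Rightarrow> 'a" where
  "mean_field N w X i = (1 / (real N - 1)) *\<^sub>R (\<Sum>j\<in>{..<N} - {i}. w i j *\<^sub>R (X j - X i))"

lemma cons_rhs_eq_mean_field:
  "cons_rhs N t \<psi> x i s =
     switch_alpha t s *\<^sub>R mean_field N (\<lambda>j l. \<psi> (norm (x j s - x l s))) (\<lambda>j. x j s) i"
  by (simp add: cons_rhs_def mean_field_def scaleR_sum_right)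

lemma inner_mean_field_diameter_pair_le:
  fixes X :: "nat \<Rightarrow> 'a::real_inner"
  assumes N: "2 \<le> N" and ik: "i < N" "k < N"
    and maximal: "\<And>j l. j < N \<Longrightarrow> l < N \<Longrightarrow> norm (X j - X l) \<le> norm (X i - X k)"
    and lo: "\<And>j l. j < N \<Longrightarrow> l < N \<Longrightarrow> lo \<le> w j l" "0 \<le> lo"
  shows "inner (X i - X k) (mean_field N w X i - mean_field N w X k) \<le> - lo * (norm (X i - X k))\<^sup>2"
proof -
  define u where "u = X i - X k"
  define A where "A j = inner u (X j - X i)" for j
  define B where "B j = inner u (X j - X k)" for j
  have A: "A j \<le> 0" and B: "0 \<le> B j" if "j < N" for j
    using diameter_pair_slab[OF ik that maximal] by (auto simp: A_def B_def u_def)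
  have B_eq: "B j = A j + (norm u)\<^sup>2" for j
    by (simp add: A_def B_def u_def inner_diff_right power2_norm_eq_inner)
  have "(\<Sum>j\<in>{..<N} - {i}. w i j * A j) \<le> (\<Sum>j\<in>{..<N} - {i}. lo * A j)"
    using A lo(1) ik by (intro sum_mono mult_right_mono_neg) auto
  also have "\<dots> = lo * (\<Sum>j<N. A j)"
    using ik by (simp add: sum_diff1 A_def sum_distrib_left)
  finally have Ai: "(\<Sum>j\<in>{..<N} - {i}. w i j * A j) \<le> lo * (\<Sum>j<N. A j)" .
  have "lo * (\<Sum>j<N. B j) = (\<Sum>j\<in>{..<N} - {k}. lo * B j)"
    using ik by (simp add: sum_diff1 B_def sum_distrib_left)
  also have "\<dots> \<le> (\<Sum>j\<in>{..<N} - {k}. w k j * B j)"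
    using B lo(1) ik by (intro sum_mono mult_right_mono) auto
  finally have Bk: "lo * (\<Sum>j<N. B j) \<le> (\<Sum>j\<in>{..<N} - {k}. w k j * B j)" .
  have N1: "0 < real N - 1" using N by simp
  have "inner u (mean_field N w X i - mean_field N w X k)
      = ((\<Sum>j\<in>{..<N} - {i}. w i j * A j) - (\<Sum>j\<in>{..<N} - {k}. w k j * B j)) / (real N - 1)"
    by (simp add: mean_field_def A_def B_def inner_diff_right inner_sum_right diff_divide_distrib)
  also have "\<dots> \<le> (lo * (\<Sum>j<N. A j) - lo * (\<Sum>j<N. B j)) / (real N - 1)"
    using Ai Bk N1 by (intro divide_right_mono) auto
  also have "\<dots> = - lo * (norm u)\<^sup>2 * (real N / (real N - 1))"
    by (simp add: B_eq sum.distrib algebra_simps)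
  also have "\<dots> \<le> - lo * (norm u)\<^sup>2 * 1"
    using N1 lo(2) by (intro mult_left_mono_neg) (auto simp: field_simps)
  finally show ?thesis by (simp add: u_def)
qed

lemma norm_mean_field_le:
  fixes X :: "nat \<Rightarrow> 'a::real_normed_vector"
  assumes N: "2 \<le> N" and "i < N"
    and w: "\<And>j. j < N \<Longrightarrow> 0 \<le> w i j" "\<And>j. j < N \<Longrightarrow> w i j \<le> K"
    and d: "\<And>j. j < N \<Longrightarrow> norm (X j - X i) \<le> d"
  shows "norm (mean_field N w X i) \<le> K * d"
proof -
  have N1: "0 < real N - 1" using N by simp
  have "0 \<le> K" using w \<open>i < N\<close> by (meson order_trans)
  have "norm (\<Sum>j\<in>{..<N} - {i}. w i j *\<^sub>R (X j - X i)) \<le> (\<Sum>j\<in>{..<N} - {i}. K * d)"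
    by (rule order_trans[OF norm_sum sum_mono]) (use w d \<open>0 \<le> K\<close> in \<open>auto intro!: mult_mono\<close>)
  also have "\<dots> = (real N - 1) * (K * d)"
    using \<open>i < N\<close> N by (simp add: of_nat_diff)
  finally show ?thesis
    using N1 by (simp add: mean_field_def field_simps)
qed

section \<open>Diameter estimates along a solution\<close>

lemma switch_alpha_attracting:
  assumes "mono t" "t 0 = 0" and u: "u \<in> {t (2*m)<..<t (2*m+1)}"
  shows "switch_alpha t u = 1"
proof -
  have "u \<noteq> 0" using u monoD[OF \<open>mono t\<close>, of 0 "2*m"] \<open>t 0 = 0\<close> by auto
  moreover have "\<not> (t (2*n+1) \<le> u \<and> u \<le> t (2*n+2))" for n
  proof (cases "m \<le> n")
    case True
    then have "t (2*m+1) \<le> t (2*n+1)" using \<open>mono t\<close> by (simp add: monoD)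
    then show ?thesis using u by auto
  next
    case False
    then have "t (2*n+2) \<le> t (2*m)" using \<open>mono t\<close> by (simp add: monoD)
    then show ?thesis using u by auto
  qed
  ultimately show ?thesis by (auto simp: switch_alpha_def)
qed

lemma switch_alpha_repelling:
  assumes "mono t" "t 0 = 0" and u: "u \<in> {t (2*m+1)<..<t (2*m+2)}"
  shows "switch_alpha t u = -1"
proof -
  have "u \<noteq> 0" using u monoD[OF \<open>mono t\<close>, of 0 "2*m+1"] \<open>t 0 = 0\<close> by auto
  moreover have "\<exists>n. t (2*n+1) \<le> u \<and> u \<le> t (2*n+2)" using u by (intro exI[of _ m]) auto
  ultimately show ?thesis by (simp add: switch_alpha_def)
qed

lemma is_solution_on_interval:
  assumes "is_solution N t \<psi> x" "0 \<le> t n" "i < N"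
  shows "continuous_on {t n..t (Suc n)} (x i)"
    and "u \<in> {t n<..<t (Suc n)} \<Longrightarrow> (x i has_vector_derivative cons_rhs N t \<psi> x i u) (at u)"
  using assms by (auto simp: is_solution_def elim!: continuous_on_subset)

lemma is_solution_diam_attracting:
  fixes x :: "nat \<Rightarrow> real \<Rightarrow> 'a::real_inner"
  assumes sol: "is_solution N t \<psi> x" and N: "2 \<le> N" and t: "mono t" "t 0 = 0"
    and lo: "0 \<le> lo"
      "\<And>u i j. u \<in> {t (2*m)<..<t (2*m+1)} \<Longrightarrow> i < N \<Longrightarrow> j < N \<Longrightarrow> lo \<le> \<psi> (norm (x i u - x j u))"
    and s: "t (2*m) \<le> s" "s \<le> t (2*m+1)"
  shows "diam_conf N x s \<le> exp (- lo * (s - t (2*m))) * diam_conf N x (t (2*m))"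
proof -
  have t0: "0 \<le> t (2*m)" using monoD[OF t(1), of 0 "2*m"] t(2) by simp
  show ?thesis
  proof (rule diam_conf_exp_bound[where v = "cons_rhs N t \<psi> x"])
    fix i k u
    assume ik: "i < N" "k < N" and u: "u \<in> {t (2*m)<..<t (2*m+1)}"
      and diam: "norm (x i u - x k u) = diam_conf N x u"
    show "inner (x i u - x k u) (cons_rhs N t \<psi> x i u - cons_rhs N t \<psi> x k u)
          \<le> - lo * (norm (x i u - x k u))\<^sup>2"
      unfolding cons_rhs_eq_mean_field switch_alpha_attracting[OF t u] scaleR_one
      using ik u by (intro inner_mean_field_diameter_pair_le N lo)
        (auto simp: diam norm_le_diam_conf)
  qed (use N s is_solution_on_interval[OF sol t0] in auto)
qed

lemma is_solution_diam_contracting: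
  fixes x :: "nat \<Rightarrow> real \<Rightarrow> 'a::real_inner"
  assumes sol: "is_solution N t \<psi> x" and N: "2 \<le> N" and t: "mono t" "t 0 = 0"
    and lo: "0 \<le> lo" "\<And>y. 0 \<le> y \<Longrightarrow> y \<le> M \<Longrightarrow> lo \<le> \<psi> y"
    and bounded: "\<forall>u\<in>{t (2*m)<..<t (2*m+1)}. diam_conf N x u \<le> M"
  shows "diam_conf N x (t (2*m+1)) \<le> exp (- lo * (t (2*m+1) - t (2*m))) * diam_conf N x (t (2*m))"
proof (rule is_solution_diam_attracting[OF sol N t lo(1) _ _ order_refl])
  fix u i j assume u: "u \<in> {t (2*m)<..<t (2*m+1)}" and ij: "i < N" "j < N"
  have "norm (x i u - x j u) \<le> M"
    using norm_le_diam_conf[OF ij, of x u] bspec[OF bounded u] by (rule order_trans)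
  then show "lo \<le> \<psi> (norm (x i u - x j u))" by (intro lo(2)) simp_all
qed (use t in \<open>simp add: monoD\<close>)

lemma is_solution_diam_repelling:
  fixes x :: "nat \<Rightarrow> real \<Rightarrow> 'a::real_inner"
  assumes sol: "is_solution N t \<psi> x" and N: "2 \<le> N" and t: "mono t" "t 0 = 0"
    and \<psi>: "\<And>y. 0 \<le> \<psi> y" "\<And>y. \<psi> y \<le> K"
    and s: "t (2*m+1) \<le> s" "s \<le> t (2*m+2)"
  shows "diam_conf N x s \<le> exp (2 * K * (s - t (2*m+1))) * diam_conf N x (t (2*m+1))"
proof -
  have t0: "0 \<le> t (2*m+1)" using monoD[OF t(1), of 0 "2*m+1"] t(2) by simp
  show ?thesis
  proof (rule diam_conf_exp_bound[where v = "cons_rhs N t \<psi> x"])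
    fix i k u
    assume ik: "i < N" "k < N" and u: "u \<in> {t (2*m+1)<..<t (2*m+2)}"
      and diam: "norm (x i u - x k u) = diam_conf N x u"
    let ?F = "mean_field N (\<lambda>j l. \<psi> (norm (x j u - x l u))) (\<lambda>j. x j u)"
    have F: "norm (?F l) \<le> K * norm (x i u - x k u)" if "l < N" for l
      using that ik by (intro norm_mean_field_le N \<psi>) (auto simp: diam norm_le_diam_conf)
    have "norm (?F k - ?F i) \<le> 2 * K * norm (x i u - x k u)"
      using norm_triangle_ineq4[of "?F k" "?F i"] F[OF ik(1)] F[OF ik(2)] by linarith
    then have "norm (x i u - x k u) * norm (?F k - ?F i) \<le> norm (x i u - x k u) * (2 * K * norm (x i u - x k u))"
      by (rule mult_left_mono) simp
    with norm_cauchy_schwarz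
    have "inner (x i u - x k u) (?F k - ?F i) \<le> norm (x i u - x k u) * (2 * K * norm (x i u - x k u))"
      by (rule order_trans)
    then show "inner (x i u - x k u) (cons_rhs N t \<psi> x i u - cons_rhs N t \<psi> x k u)
          \<le> 2 * K * (norm (x i u - x k u))\<^sup>2"
      unfolding cons_rhs_eq_mean_field switch_alpha_repelling[OF t u]
      by (simp add: power2_eq_square algebra_simps scaleR_diff_right[symmetric])
  qed (use N s is_solution_on_interval[OF sol t0] in auto)
qed

section \<open>Switching cycles\<close>

lemma double_le_ln_exp_div_two_minus_exp:
  fixes y :: real
  assumes "0 \<le> y" "y < ln 2"
  shows "2 * y \<le> ln (exp y / (2 - exp y))"
proof -
  have "exp y < 2" using assms(2) by (metis exp_less_cancel_iff exp_ln zero_less_numeral)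
  have "exp y * (2 - exp y) \<le> 1"
    using zero_le_power2[of "exp y - 1"] by (simp add: power2_eq_square algebra_simps)
  then have "exp y * (exp y * (2 - exp y)) \<le> exp y * 1" by (rule mult_left_mono) simp
  then have "exp y * exp y \<le> exp y / (2 - exp y)"
    using \<open>exp y < 2\<close> by (simp add: field_simps)
  then have "ln (exp y * exp y) \<le> ln (exp y / (2 - exp y))"
    by (simp add: \<open>exp y < 2\<close>)
  then show ?thesis by (simp add: ln_mult)
qed

lemma neg_mult_le_ln_max:
  fixes K \<tau> c :: real
  assumes "0 < K" "0 \<le> c" "c \<le> K"
  shows "- c * \<tau> \<le> ln (max (1 - exp (- K * \<tau>)) (1 - (c / K) * (1 - exp (- K * \<tau>))))"
proof -
  define r where "r = c / K"
  have r: "0 \<le> r" "r \<le> 1" using assms by (auto simp: r_def)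
  have "exp ((1 - r) *\<^sub>R 0 + r *\<^sub>R (- K * \<tau>)) \<le> (1 - r) * exp 0 + r * exp (- K * \<tau>)"
    using r by (intro convex_onD[OF exp_convex]) auto
  then have "exp (- c * \<tau>) \<le> 1 - r * (1 - exp (- K * \<tau>))"
    using assms by (simp add: r_def algebra_simps)
  also have "\<dots> \<le> max (1 - exp (- K * \<tau>)) (1 - r * (1 - exp (- K * \<tau>)))" by simp
  finally show ?thesis
    unfolding r_def by (subst ln_ge_iff) (auto intro: less_le_trans[OF exp_gt_zero])
qed

lemma INF_Icc_pos:
  fixes f :: "real \<Rightarrow> real"
  assumes "\<And>y. 0 < f y" "0 \<le> M"
  shows "0 \<le> (INF y\<in>{-M..M}. f y)" and "\<bar>z\<bar> \<le> M \<Longrightarrow> (INF y\<in>{-M..M}. f y) \<le> f z"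
proof -
  show "0 \<le> (INF y\<in>{-M..M}. f y)" using assms by (intro cINF_greatest) (auto simp: less_imp_le)
  have "bdd_below (f ` {-M..M})" using assms(1) by (intro bdd_belowI2[of _ 0]) (simp add: less_imp_le)
  then show "(INF y\<in>{-M..M}. f y) \<le> f z" if "\<bar>z\<bar> \<le> M" using that by (intro cINF_lower) auto
qed

text \<open>Logarithm of the largest factor by which the first \<open>m\<close> cycles can change the diameter:
  growth rate \<open>2 * K\<close> on repelling phases, decay rate \<open>c\<close> on attracting ones.\<close>

definition cycle_exponent :: "(nat \<Rightarrow> real) \<Rightarrow> real \<Rightarrow> real \<Rightarrow> nat \<Rightarrow> real" where
  "cycle_exponent t K c m = (\<Sum>p<m. 2 * K * (t (2*p+2) - t (2*p+1)) - c * (t (2*p+1) - t (2*p)))"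

lemma cycle_exponent_le:
  assumes "mono t" "0 < K" "0 \<le> c"
    and gaps: "\<And>p. t (2*p+2) - t (2*p+1) < ln 2 / K"
    and summable: "summable (\<lambda>p. ln (exp (K * (t (2*p+2) - t (2*p+1))) / (2 - exp (K * (t (2*p+2) - t (2*p+1))))))"
  shows "cycle_exponent t K c m \<le> (\<Sum>p. ln (exp (K * (t (2*p+2) - t (2*p+1))) / (2 - exp (K * (t (2*p+2) - t (2*p+1))))))"
    and "cycle_exponent t K c m \<le> (\<Sum>p. ln (exp (K * (t (2*p+2) - t (2*p+1))) / (2 - exp (K * (t (2*p+2) - t (2*p+1))))))
           + (\<Sum>p<m. - c * (t (2*p+1) - t (2*p)))"
proof -
  define L where "L p = ln (exp (K * (t (2*p+2) - t (2*p+1))) / (2 - exp (K * (t (2*p+2) - t (2*p+1)))))" for p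
  have gap: "0 \<le> t (2*p+2) - t (2*p+1)" "0 \<le> t (2*p+1) - t (2*p)" for p
    using monoD[OF \<open>mono t\<close>] by auto
  have L: "2 * K * (t (2*p+2) - t (2*p+1)) \<le> L p" for p
  proof -
    have "K * (t (2*p+2) - t (2*p+1)) < ln 2"
      using gaps[of p] \<open>0 < K\<close> by (simp add: pos_less_divide_eq mult.commute)
    then show ?thesis
      using double_le_ln_exp_div_two_minus_exp[of "K * (t (2*p+2) - t (2*p+1))"] gap[of p] \<open>0 < K\<close>
      by (simp add: L_def mult.assoc)
  qed
  have "0 \<le> L p" for p
    using order_trans[OF _ L[of p]] gap[of p] \<open>0 < K\<close> by simp
  then have "(\<Sum>p<m. L p) \<le> (\<Sum>p. L p)"
    using summable unfolding L_def[symmetric] by (intro sum_le_suminf) auto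
  moreover have "(\<Sum>p<m. 2 * K * (t (2*p+2) - t (2*p+1))) \<le> (\<Sum>p<m. L p)"
    by (intro sum_mono L)
  moreover have "(\<Sum>p<m. - c * (t (2*p+1) - t (2*p))) \<le> 0"
    using gap \<open>0 \<le> c\<close> by (intro sum_nonpos) (simp add: mult_nonneg_nonneg)
  moreover have "cycle_exponent t K c m
      = (\<Sum>p<m. 2 * K * (t (2*p+2) - t (2*p+1))) + (\<Sum>p<m. - c * (t (2*p+1) - t (2*p)))"
    by (simp add: cycle_exponent_def sum_subtractf sum_negf)
  ultimately show "cycle_exponent t K c m \<le> (\<Sum>p. L p)"
    and "cycle_exponent t K c m \<le> (\<Sum>p. L p) + (\<Sum>p<m. - c * (t (2*p+1) - t (2*p)))"
    by linarith+
qed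

lemma cycle_exponent_tendsto_at_bot:
  assumes "mono t" "0 < K" "0 \<le> c" "c \<le> K"
    and gaps: "\<And>p. t (2*p+2) - t (2*p+1) < ln 2 / K"
    and summable: "summable (\<lambda>p. ln (exp (K * (t (2*p+2) - t (2*p+1))) / (2 - exp (K * (t (2*p+2) - t (2*p+1))))))"
    and diverge: "filterlim (\<lambda>n. \<Sum>p<n. ln (max (1 - exp (- K * (t (2*p+1) - t (2*p))))
                    (1 - (c / K) * (1 - exp (- K * (t (2*p+1) - t (2*p))))))) at_bot sequentially"
  shows "filterlim (cycle_exponent t K c) at_bot sequentially"
  unfolding filterlim_at_bot
proof
  fix Z :: real
  let ?S = "\<Sum>p. ln (exp (K * (t (2*p+2) - t (2*p+1))) / (2 - exp (K * (t (2*p+2) - t (2*p+1)))))"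
  have "eventually (\<lambda>n. (\<Sum>p<n. ln (max (1 - exp (- K * (t (2*p+1) - t (2*p))))
          (1 - (c / K) * (1 - exp (- K * (t (2*p+1) - t (2*p))))))) \<le> Z - ?S) sequentially"
    using diverge by (simp add: filterlim_at_bot)
  then show "eventually (\<lambda>n. cycle_exponent t K c n \<le> Z) sequentially"
  proof eventually_elim
    case (elim n)
    have "(\<Sum>p<n. - c * (t (2*p+1) - t (2*p))) \<le> (\<Sum>p<n. ln (max (1 - exp (- K * (t (2*p+1) - t (2*p))))
          (1 - (c / K) * (1 - exp (- K * (t (2*p+1) - t (2*p)))))))"
      using assms(2-4) by (intro sum_mono neg_mult_le_ln_max)
    then show ?case using cycle_exponent_le(2)[OF assms(1-3) gaps summable, of n] elim by linarith
  qed
qed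

lemma switching_cycle_bound:
  fixes D :: "real \<Rightarrow> real"
  assumes attr: "\<And>m s. t (2*m) \<le> s \<Longrightarrow> s \<le> t (2*m+1) \<Longrightarrow> D s \<le> D (t (2*m))"
    and contr: "\<And>m. \<forall>u\<in>{t (2*m)<..<t (2*m+1)}. D u \<le> M \<Longrightarrow>
                  D (t (2*m+1)) \<le> exp (- c * (t (2*m+1) - t (2*m))) * D (t (2*m))"
    and rep: "\<And>m. D (t (2*m+2)) \<le> exp (2 * K * (t (2*m+2) - t (2*m+1))) * D (t (2*m+1))"
    and budget: "\<And>m. exp (cycle_exponent t K c m) * D (t 0) \<le> M"
  shows "D (t (2*m)) \<le> exp (cycle_exponent t K c m) * D (t 0)"
proof (induction m)
  case 0
  then show ?case by (simp add: cycle_exponent_def)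
next
  case (Suc m)
  have "D u \<le> M" if "u \<in> {t (2*m)<..<t (2*m+1)}" for u
    using attr[of m u] that Suc budget[of m] by simp
  then have "D (t (2*m+1)) \<le> exp (- c * (t (2*m+1) - t (2*m))) * D (t (2*m))"
    using contr by blast
  then have "D (t (2*m+2)) \<le> exp (2 * K * (t (2*m+2) - t (2*m+1))) * (exp (- c * (t (2*m+1) - t (2*m))) * D (t (2*m)))"
    using rep[of m] by (meson exp_ge_zero mult_left_mono order_trans)
  also have "\<dots> \<le> exp (2 * K * (t (2*m+2) - t (2*m+1))) * (exp (- c * (t (2*m+1) - t (2*m))) * (exp (cycle_exponent t K c m) * D (t 0)))"
    using Suc by (intro mult_left_mono) auto
  also have "\<dots> = exp (cycle_exponent t K c (Suc m)) * D (t 0)"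
    by (simp add: cycle_exponent_def exp_add exp_diff exp_minus field_simps)
  finally show ?case by simp
qed

lemma mono_unbounded_interval_cover:
  fixes t :: "nat \<Rightarrow> real"
  assumes "mono t" "filterlim t at_top sequentially" "t n0 \<le> s"
  obtains n where "n0 \<le> n" "t n \<le> s" "s \<le> t (Suc n)"
proof -
  obtain n1 where "s < t n1" using assms(2) unfolding filterlim_at_top_dense
    by (meson eventually_sequentially order_refl)
  define n where "n = (LEAST n. s < t n) - 1"
  have least: "s < t (LEAST n. s < t n)" using \<open>s < t n1\<close> by (rule LeastI)
  have "n0 < (LEAST n. s < t n)"
  proof (rule ccontr)
    assume "\<not> ?thesis"
    then have "t (LEAST n. s < t n) \<le> t n0" using monoD[OF assms(1)] by simp
    then show False using least assms(3) by simp
  qed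
  then have "Suc n = (LEAST n. s < t n)" by (simp add: n_def)
  moreover have "t n \<le> s" using not_less_Least[of n "\<lambda>n. s < t n"] \<open>Suc n = _\<close> by auto
  ultimately show ?thesis using that[of n] least \<open>n0 < _\<close> by (simp add: n_def less_imp_le)
qed

lemma tendsto_zero_of_interval_bounds:
  fixes f :: "real \<Rightarrow> real" and t b :: "nat \<Rightarrow> real"
  assumes "mono t" "filterlim t at_top sequentially"
    and bound: "\<And>n s. t n \<le> s \<Longrightarrow> s \<le> t (Suc n) \<Longrightarrow> \<bar>f s\<bar> \<le> b n"
    and "b \<longlonglongrightarrow> 0"
  shows "(f \<longlongrightarrow> 0) at_top"
proof (rule tendstoI)
  fix e :: real assume "e > 0"
  then obtain n0 where n0: "\<And>n. n0 \<le> n \<Longrightarrow> \<bar>b n\<bar> < e"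
    using \<open>b \<longlonglongrightarrow> 0\<close> unfolding lim_sequentially by auto
  show "eventually (\<lambda>s. dist (f s) 0 < e) at_top"
    unfolding eventually_at_top_linorder
  proof (intro exI allI impI)
    fix s assume "t n0 \<le> s"
    with assms(1,2) obtain n where "n0 \<le> n" "t n \<le> s" "s \<le> t (Suc n)"
      by (rule mono_unbounded_interval_cover)
    then show "dist (f s) 0 < e" using bound[of n s] n0[of n] by simp
  qed
qed

lemma filterlim_div_2_sequentially: "filterlim (\<lambda>n::nat. n div 2) sequentially sequentially"
  unfolding filterlim_at_top eventually_sequentially
proof
  fix Z :: nat
  show "\<exists>n0. \<forall>n\<ge>n0. Z \<le> n div 2" by (rule exI[of _ "2 * Z"]) auto
qed

lemma switching_bound_within_cycle:
  fixes D :: "real \<Rightarrow> real" and t :: "nat \<Rightarrow> real"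
  assumes "mono t" "0 < K" and D_nonneg: "\<And>s. 0 \<le> D s"
    and attr: "\<And>s. t (2*m) \<le> s \<Longrightarrow> s \<le> t (2*m+1) \<Longrightarrow> D s \<le> D (t (2*m))"
    and rep: "\<And>s. t (2*m+1) \<le> s \<Longrightarrow> s \<le> t (2*m+2) \<Longrightarrow>
                D s \<le> exp (2 * K * (s - t (2*m+1))) * D (t (2*m+1))"
    and gap: "t (2*m+2) - t (2*m+1) < ln 2 / K"
    and start: "D (t (2*m)) \<le> B"
    and s: "t (2*m) \<le> s" "s \<le> t (2*m+2)"
  shows "D s \<le> 4 * B"
proof (cases "s \<le> t (2*m+1)")
  case True
  then show ?thesis using attr[OF s(1)] start D_nonneg[of "t (2*m)"] by linarith
next
  case False
  have "K * (s - t (2*m+1)) \<le> K * (t (2*m+2) - t (2*m+1))"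
    using s(2) \<open>0 < K\<close> by (intro mult_left_mono) auto
  also have "\<dots> < ln 2"
    using gap \<open>0 < K\<close> by (simp add: pos_less_divide_eq mult.commute)
  finally have "exp (2 * K * (s - t (2*m+1))) \<le> exp (2 * ln 2)" by simp
  also have "\<dots> = 4" by (simp add: exp_of_nat_mult[of 2, simplified])
  finally have "exp (2 * K * (s - t (2*m+1))) \<le> 4" .
  moreover have "D (t (2*m+1)) \<le> B"
    using attr[of "t (2*m+1)"] monoD[OF \<open>mono t\<close>, of "2*m" "2*m+1"] start by simp
  ultimately have "exp (2 * K * (s - t (2*m+1))) * D (t (2*m+1)) \<le> 4 * B"
    using D_nonneg by (intro mult_mono) auto
  then show ?thesis using rep[of s] False s(2) by simp
qed

lemma switching_tendsto_zero:
  fixes D :: "real \<Rightarrow> real" and t :: "nat \<Rightarrow> real"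
  assumes t: "mono t" "filterlim t at_top sequentially" and "0 < K"
    and D_nonneg: "\<And>s. 0 \<le> D s"
    and attr: "\<And>m s. t (2*m) \<le> s \<Longrightarrow> s \<le> t (2*m+1) \<Longrightarrow> D s \<le> D (t (2*m))"
    and contr: "\<And>m. \<forall>u\<in>{t (2*m)<..<t (2*m+1)}. D u \<le> M \<Longrightarrow>
                  D (t (2*m+1)) \<le> exp (- c * (t (2*m+1) - t (2*m))) * D (t (2*m))"
    and rep: "\<And>m s. t (2*m+1) \<le> s \<Longrightarrow> s \<le> t (2*m+2) \<Longrightarrow>
                D s \<le> exp (2 * K * (s - t (2*m+1))) * D (t (2*m+1))"
    and gaps: "\<And>m. t (2*m+2) - t (2*m+1) < ln 2 / K"
    and budget: "\<And>m. exp (cycle_exponent t K c m) * D (t 0) \<le> M"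
    and diverge: "filterlim (cycle_exponent t K c) at_bot sequentially"
  shows "(D \<longlongrightarrow> 0) at_top"
proof -
  define B where "B m = exp (cycle_exponent t K c m) * D (t 0)" for m
  have cycle: "D (t (2*m)) \<le> B m" for m
    unfolding B_def
  proof (rule switching_cycle_bound[OF attr contr _ budget])
    show "D (t (2*m+2)) \<le> exp (2 * K * (t (2*m+2) - t (2*m+1))) * D (t (2*m+1))" for m
      using monoD[OF t(1), of "2*m+1" "2*m+2"] by (intro rep) auto
  qed
  have within: "D s \<le> 4 * B m" if "t (2*m) \<le> s" "s \<le> t (2*m+2)" for m s
    using t(1) \<open>0 < K\<close> D_nonneg attr rep gaps cycle that by (rule switching_bound_within_cycle)
  have "(\<lambda>m. exp (cycle_exponent t K c (m div 2))) \<longlonglongrightarrow> 0"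
    by (rule filterlim_compose[OF exp_at_bot filterlim_compose[OF diverge filterlim_div_2_sequentially]])
  then have "(\<lambda>n. 4 * B (n div 2)) \<longlonglongrightarrow> 0"
    unfolding B_def by (intro tendsto_mult_right_zero tendsto_mult_left_zero)
  moreover have "\<bar>D s\<bar> \<le> 4 * B (n div 2)" if "t n \<le> s" "s \<le> t (Suc n)" for n s
  proof -
    have "t (2 * (n div 2)) \<le> t n" "t (Suc n) \<le> t (2 * (n div 2) + 2)"
      using monoD[OF t(1)] by auto
    then show ?thesis using within[of "n div 2" s] that D_nonneg[of s] by simp
  qed
  ultimately show ?thesis by (intro tendsto_zero_of_interval_bounds[OF t, of D "\<lambda>n. 4 * B (n div 2)"])
qed

theorem theorem5p1:
  fixes N :: nat and \<psi> :: "real \<Rightarrow> real" and t :: "nat \<Rightarrow> real"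
    and x :: "nat \<Rightarrow> real \<Rightarrow> 'a::euclidean_space"
  assumes N2: "N \<ge> 2"
    and psi_pos: "\<And>y. \<psi> y > 0"
    and psi_bdd: "bounded (range \<psi>)"
    and psi_cont: "continuous_on UNIV \<psi>"
    and t_mono: "strict_mono t"
    and t0: "t 0 = 0"
    and t_lim: "filterlim t at_top sequentially"
    and gaps: "\<And>n. t (2*n+2) - t (2*n+1) < ln 2 / (SUP y. \<psi> y)"
    and sum1: "summable (\<lambda>p. ln (exp ((SUP y. \<psi> y) * (t (2*p+2) - t (2*p+1)))
                     / (2 - exp ((SUP y. \<psi> y) * (t (2*p+2) - t (2*p+1))))))"
    and sum2: "let K = (SUP y. \<psi> y);
                   M0 = exp (\<Sum>p. ln (exp (K * (t (2*p+2) - t (2*p+1)))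
                                  / (2 - exp (K * (t (2*p+2) - t (2*p+1)))))) * diam_conf N x 0;
                   \<psi>0 = (INF y\<in>{-M0..M0}. \<psi> y)
               in filterlim (\<lambda>n. \<Sum>p<n. ln (max (1 - exp (- K * (t (2*p+1) - t (2*p))))
                                      (1 - (\<psi>0 / K) * (1 - exp (- K * (t (2*p+1) - t (2*p)))))))
                    at_bot sequentially"
    and sol: "is_solution N t \<psi> x"
  shows "((\<lambda>s. diam_conf N x s) \<longlongrightarrow> 0) at_top"
proof -
  define K where "K = (SUP y. \<psi> y)"
  have \<psi>_le_K: "\<psi> y \<le> K" for y
    unfolding K_def using bounded_imp_bdd_above[OF psi_bdd] by (rule cSUP_upper[rotated]) simp
  have "0 < K" using psi_pos[of 0] \<psi>_le_K[of 0] by linarith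
  define M0 where "M0 = exp (\<Sum>p. ln (exp (K * (t (2*p+2) - t (2*p+1)))
                           / (2 - exp (K * (t (2*p+2) - t (2*p+1)))))) * diam_conf N x 0"
  define \<psi>0 where "\<psi>0 = (INF y\<in>{-M0..M0}. \<psi> y)"
  have "0 \<le> M0" using N2 by (simp add: M0_def diam_conf_nonneg)
  note \<psi>0 = INF_Icc_pos[of \<psi> M0, OF psi_pos \<open>0 \<le> M0\<close>, folded \<psi>0_def]
  have "\<psi>0 \<le> K" using \<psi>0(2)[of 0] \<open>0 \<le> M0\<close> \<psi>_le_K[of 0] by simp
  have "mono t" using t_mono by (rule strict_mono_mono)
  show ?thesis
  proof (rule switching_tendsto_zero[OF \<open>mono t\<close> t_lim \<open>0 < K\<close>, where M = M0 and c = \<psi>0])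
    show "0 \<le> diam_conf N x s" for s using N2 by (simp add: diam_conf_nonneg)
    show "diam_conf N x s \<le> diam_conf N x (t (2*m))" if "t (2*m) \<le> s" "s \<le> t (2*m+1)" for m s
      using is_solution_diam_attracting[OF sol N2 \<open>mono t\<close> t0 order_refl _ that] psi_pos
      by (simp add: less_imp_le)
    show "diam_conf N x (t (2*m+1)) \<le> exp (- \<psi>0 * (t (2*m+1) - t (2*m))) * diam_conf N x (t (2*m))"
      if "\<forall>u\<in>{t (2*m)<..<t (2*m+1)}. diam_conf N x u \<le> M0" for m
      using \<psi>0(2) by (intro is_solution_diam_contracting[OF sol N2 \<open>mono t\<close> t0 \<open>0 \<le> \<psi>0\<close> _ that]) simp
    show "diam_conf N x s \<le> exp (2 * K * (s - t (2*m+1))) * diam_conf N x (t (2*m+1))"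
      if "t (2*m+1) \<le> s" "s \<le> t (2*m+2)" for m s
      using is_solution_diam_repelling[OF sol N2 \<open>mono t\<close> t0 _ \<psi>_le_K that] psi_pos less_imp_le by blast
    show "t (2*m+2) - t (2*m+1) < ln 2 / K" for m using gaps by (simp add: K_def)
    show "exp (cycle_exponent t K \<psi>0 m) * diam_conf N x (t 0) \<le> M0" for m
      using cycle_exponent_le(1)[OF \<open>mono t\<close> \<open>0 < K\<close> \<open>0 \<le> \<psi>0\<close> gaps[folded K_def] sum1[folded K_def]]
        N2 unfolding M0_def t0 by (intro mult_right_mono) (auto simp: diam_conf_nonneg)
    show "filterlim (cycle_exponent t K \<psi>0) at_bot sequentially"
      using sum2[folded K_def, unfolded Let_def, folded M0_def \<psi>0_def]
      by (rule cycle_exponent_tendsto_at_bot[OF \<open>mono t\<close> \<open>0 < K\<close> \<open>0 \<le> \<psi>0\<close> \<open>\<psi>0 \<le> K\<close>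
            gaps[folded K_def] sum1[folded K_def]])
  qed
qed

end
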